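(* With respect to the set of pure Nash equilibrium outcomes, the mechanism $\mathcal{CUDD}$ satisfies symmetry, invariance with respect to repetition of alternatives (IRA), and existence of a Pareto efficient equilibrium (for every collection $A$, some pure Nash equilibrium outcome of $\Gamma_{\mathcal{CUDD}}(A)$ is Pareto efficient).
   Context: Two players bargain over a collection (multiset) $A=(a^k)_{k\in[n]}$, $a^k\in[0,1]^2$, $a^k_i$ being player $i$'s utility; players are risk neutral and outcomes are expected-utility vectors; $NEO(A)$ denotes the set of pure Nash equilibrium outcomes. Mechanism $\mathcal{CUDD}$: each player $i$ submits $(g_i,d_i)\in[n]^2$; if $g_1=g_2$ the chosen index is $g_1$, otherwise it is uniform over $\{d_1,d_2\}$. Symmetry: a collection is symmetric if for all $x_1,x_2$, $|\{k:a^k=(x_1,x_2)\}|=|\{k:a^k=(x_2,x_1)\}|$; the mechanism is symmetric if $NEO(A)$ is closed under swapping coordinates for every symmetric $A$. IRA: for $j\in[n]$ let $(A,j)=(a_1,\dots,a_n,a_j)$; IRA means $NEO(A)=NEO((A,j))$ for all $A,j$. An outcome $x$ is Pareto efficient if there is no $a\in A$ with $a_1>x_1$ and $a_2>x_2$. *)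

theory Defs
  imports Main "HOL-Library.Multiset" Complex_Main
begin

(* A collection A = (a^1,...,a^n) is a list of utility pairs; index set [n] is
   rendered 0-based as {0..<length A}. *)
type_synonym collection = "(real \<times> real) list"

definition is_collection :: "collection \<Rightarrow> bool" where
  "is_collection A \<longleftrightarrow> A \<noteq> [] \<and>
     (\<forall>a\<in>set A. 0 \<le> fst a \<and> fst a \<le> 1 \<and> 0 \<le> snd a \<and> snd a \<le> 1)"

type_synonym strategy = "nat \<times> nat"

definition strategies :: "collection \<Rightarrow> strategy set" where
  "strategies A = {0..<length A} \<times> {0..<length A}"

(* expected-utility outcome of mechanism CUDD *)
definition cudd_outcome :: "collection \<Rightarrow> strategy \<Rightarrow> strategy \<Rightarrow> real \<times> real" where
  "cudd_outcome A s1 s2 =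
     (if fst s1 = fst s2 then A ! fst s1
      else ((fst (A ! snd s1) + fst (A ! snd s2)) / 2,
            (snd (A ! snd s1) + snd (A ! snd s2)) / 2))"

definition is_pure_NE :: "collection \<Rightarrow> strategy \<Rightarrow> strategy \<Rightarrow> bool" where
  "is_pure_NE A s1 s2 \<longleftrightarrow> s1 \<in> strategies A \<and> s2 \<in> strategies A \<and>
     (\<forall>t\<in>strategies A. fst (cudd_outcome A t s2) \<le> fst (cudd_outcome A s1 s2)) \<and>
     (\<forall>t\<in>strategies A. snd (cudd_outcome A s1 t) \<le> snd (cudd_outcome A s1 s2))"

definition NEO :: "collection \<Rightarrow> (real \<times> real) set" where
  "NEO A = {cudd_outcome A s1 s2 | s1 s2. is_pure_NE A s1 s2}"

definition swap_pair :: "real \<times> real \<Rightarrow> real \<times> real" where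
  "swap_pair x = (snd x, fst x)"

definition symmetric_collection :: "collection \<Rightarrow> bool" where
  "symmetric_collection A \<longleftrightarrow>
     (\<forall>x1 x2. count (mset A) (x1, x2) = count (mset A) (x2, x1))"

definition mechanism_symmetric :: bool where
  "mechanism_symmetric \<longleftrightarrow>
     (\<forall>A. is_collection A \<and> symmetric_collection A \<longrightarrow>
        (\<forall>x\<in>NEO A. swap_pair x \<in> NEO A))"

definition mechanism_IRA :: bool where
  "mechanism_IRA \<longleftrightarrow>
     (\<forall>A j. is_collection A \<and> j < length A \<longrightarrow> NEO A = NEO (A @ [A ! j]))"

definition pareto_efficient :: "collection \<Rightarrow> real \<times> real \<Rightarrow> bool" where
  "pareto_efficient A x \<longleftrightarrow> \<not> (\<exists>a\<in>set A. fst a > fst x \<and> snd a > snd x)"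

definition pareto_efficient_equilibrium_exists :: bool where
  "pareto_efficient_equilibrium_exists \<longleftrightarrow>
     (\<forall>A. is_collection A \<longrightarrow> (\<exists>x\<in>NEO A. pareto_efficient A x))"

end

theory Submission
  imports Defs "HOL-Analysis.Line_Segment"
begin

text \<open>
  The pure equilibrium outcomes of CUDD can be described explicitly; the description depends
  only on the set of alternatives and treats the two coordinates alike, which gives IRA and
  symmetry at once.  A player facing agreement on \<open>a\<close> can break it and secure the average of
  his best alternative and the opponent's \<open>d\<close>; the opponent can choose \<open>d\<close> worst for him, so
  \<open>a\<close> is an equilibrium outcome iff \<open>2 a\<^sub>i \<ge> max\<^sub>i + min\<^sub>i\<close> for both players.  In a disagreement
  each player must name one of his favourite alternatives, giving the midpoints of a best
  alternative for player 1 and one for player 2.  If no agreement outcome exists, such a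
  midpoint is Pareto efficient, since anything dominating it would be an agreement outcome;
  otherwise an agreement outcome maximising the utility sum is.
\<close>

definition max_utility :: "(real \<times> real \<Rightarrow> real) \<Rightarrow> (real \<times> real) set \<Rightarrow> real" where
  "max_utility p S = Max (p ` S)"

definition min_utility :: "(real \<times> real \<Rightarrow> real) \<Rightarrow> (real \<times> real) set \<Rightarrow> real" where
  "min_utility p S = Min (p ` S)"

definition agreement_outcomes :: "(real \<times> real) set \<Rightarrow> (real \<times> real) set" where
  "agreement_outcomes S =
     {a \<in> S. max_utility fst S + min_utility fst S \<le> 2 * fst a \<and>
             max_utility snd S + min_utility snd S \<le> 2 * snd a}"

definition disagreement_outcomes :: "(real \<times> real) set \<Rightarrow> (real \<times> real) set" where
  "disagreement_outcomes S =
     {midpoint a b | a b. a \<in> S \<and> b \<in> S \<and> fst a = max_utility fst S \<and> snd b = max_utility snd S}"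

definition is_best_reply :: "collection \<Rightarrow> (real \<times> real \<Rightarrow> real) \<Rightarrow> strategy \<Rightarrow> strategy \<Rightarrow> bool" where
  "is_best_reply A p s s' \<longleftrightarrow> s \<in> strategies A \<and>
     (\<forall>t\<in>strategies A. p (cudd_outcome A t s') \<le> p (cudd_outcome A s s'))"

lemma min_max_utility_bounds:
  assumes "finite S" "x \<in> S"
  shows "min_utility p S \<le> p x" "p x \<le> max_utility p S"
  using assms by (simp_all add: min_utility_def max_utility_def)

lemma max_utility_attained:
  assumes "finite S" "S \<noteq> {}"
  obtains a where "a \<in> S" "p a = max_utility p S"
proof -
  have "Max (p ` S) \<in> p ` S" using assms by (intro Max_in) simp_all
  then obtain a where "a \<in> S" "Max (p ` S) = p a" by (rule imageE)
  then show ?thesis using that[of a] unfolding max_utility_def by simp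
qed

lemma min_utility_attained:
  assumes "finite S" "S \<noteq> {}"
  obtains a where "a \<in> S" "p a = min_utility p S"
proof -
  have "Min (p ` S) \<in> p ` S" using assms by (intro Min_in) simp_all
  then obtain a where "a \<in> S" "Min (p ` S) = p a" by (rule imageE)
  then show ?thesis using that[of a] unfolding min_utility_def by simp
qed

lemma max_utility_attained_nth:
  assumes "A \<noteq> []"
  obtains i where "i < length A" "p (A ! i) = max_utility p (set A)"
proof -
  have "finite (set A)" "set A \<noteq> {}" using assms by simp_all
  then obtain a where "a \<in> set A" "p a = max_utility p (set A)" by (rule max_utility_attained)
  then show ?thesis using that by (metis in_set_conv_nth)
qed

lemma min_utility_attained_nth:
  assumes "A \<noteq> []"
  obtains i where "i < length A" "p (A ! i) = min_utility p (set A)"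
proof -
  have "finite (set A)" "set A \<noteq> {}" using assms by simp_all
  then obtain a where "a \<in> set A" "p a = min_utility p (set A)" by (rule min_utility_attained)
  then show ?thesis using that by (metis in_set_conv_nth)
qed

lemma nth_utility_bounds:
  assumes "i < length A"
  shows "min_utility p (set A) \<le> p (A ! i)" "p (A ! i) \<le> max_utility p (set A)"
  using min_max_utility_bounds[of "set A" "A ! i" p] assms by simp_all

lemma cudd_outcome_eq:
  "cudd_outcome A s1 s2 =
     (if fst s1 = fst s2 then A ! fst s1 else midpoint (A ! snd s1) (A ! snd s2))"
  by (simp add: cudd_outcome_def midpoint_def prod_eq_iff)

lemma cudd_outcome_commute: "cudd_outcome A s1 s2 = cudd_outcome A s2 s1"
  by (simp add: cudd_outcome_eq midpoint_sym)

lemma linear_midpoint: "linear p \<Longrightarrow> p (midpoint a b) = (p a + p b) / (2::real)"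
  by (simp add: midpoint_def linear_scale linear_add)

lemma payoff_agreement: "p (cudd_outcome A (g, d) (g, d')) = p (A ! g)"
  by (simp add: cudd_outcome_eq)

lemma payoff_disagreement:
  fixes p :: "real \<times> real \<Rightarrow> real"
  assumes "linear p" "g \<noteq> g'"
  shows "p (cudd_outcome A (g, d) (g', d')) = (p (A ! d) + p (A ! d')) / 2"
  using assms by (simp add: cudd_outcome_eq linear_midpoint)

lemma is_pure_NE_iff_best_replies:
  "is_pure_NE A s1 s2 \<longleftrightarrow> is_best_reply A fst s1 s2 \<and> is_best_reply A snd s2 s1"
  unfolding is_pure_NE_def is_best_reply_def by (metis cudd_outcome_commute)

lemma best_reply_agreement_bound:
  assumes "linear p" "is_best_reply A p (g, d) (g, d')" "d' < length A"
  shows "max_utility p (set A) + p (A ! d') \<le> 2 * p (A ! g)"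
proof -
  have "A \<noteq> []" using assms(3) by auto
  then obtain i where i: "i < length A" "p (A ! i) = max_utility p (set A)"
    by (rule max_utility_attained_nth)
  show ?thesis
  proof (cases "\<exists>h < length A. h \<noteq> g")
    case True
    then obtain h where "h < length A" "h \<noteq> g" by blast
    then have "p (cudd_outcome A (h, i) (g, d')) \<le> p (cudd_outcome A (g, d) (g, d'))"
      using assms(2) i(1) by (simp add: is_best_reply_def strategies_def)
    then show ?thesis
      using i \<open>h \<noteq> g\<close> by (simp add: payoff_agreement payoff_disagreement[OF assms(1)])
  next
    case False
    then have "i = g" "d' = g" using i(1) assms(3) by auto
    then show ?thesis using i by simp
  qed
qed

lemma agreement_best_reply:
  assumes "linear p" "g < length A" "d < length A"
    and "max_utility p (set A) + p (A ! d') \<le> 2 * p (A ! g)"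
  shows "is_best_reply A p (g, d) (g, d')"
  unfolding is_best_reply_def
proof (intro conjI ballI)
  show "(g, d) \<in> strategies A" using assms by (simp add: strategies_def)
  fix t assume "t \<in> strategies A"
  then obtain h e where t: "t = (h, e)" "e < length A" by (auto simp: strategies_def)
  have "p (A ! e) \<le> max_utility p (set A)" using t(2) by (rule nth_utility_bounds)
  then show "p (cudd_outcome A t (g, d')) \<le> p (cudd_outcome A (g, d) (g, d'))"
    using assms(4) t(1) by (cases "h = g") (simp_all add: payoff_agreement payoff_disagreement[OF assms(1)])
qed

lemma best_reply_disagreement_max:
  assumes "linear p" "is_best_reply A p (g, d) (g', d')" "g \<noteq> g'"
  shows "p (A ! d) = max_utility p (set A)"
proof -
  have gd: "g < length A" "d < length A"
    using assms(2) by (simp_all add: is_best_reply_def strategies_def)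
  then obtain i where i: "i < length A" "p (A ! i) = max_utility p (set A)"
    by (metis max_utility_attained_nth list.size(3) not_less0)
  have "p (cudd_outcome A (g, i) (g', d')) \<le> p (cudd_outcome A (g, d) (g', d'))"
    using assms(2) gd i(1) by (simp add: is_best_reply_def strategies_def)
  then have "max_utility p (set A) \<le> p (A ! d)"
    using i assms(3) by (simp add: payoff_disagreement[OF assms(1)])
  with nth_utility_bounds(2)[OF gd(2), of p] show ?thesis by linarith
qed

lemma disagreement_best_reply:
  assumes "linear p" "g < length A" "d < length A" "g \<noteq> g'"
    and "p (A ! d) = max_utility p (set A)" "2 * p (A ! g') \<le> p (A ! d) + p (A ! d')"
  shows "is_best_reply A p (g, d) (g', d')"
  unfolding is_best_reply_def
proof (intro conjI ballI)
  show "(g, d) \<in> strategies A" using assms by (simp add: strategies_def)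
  fix t assume "t \<in> strategies A"
  then obtain h e where t: "t = (h, e)" "e < length A" by (auto simp: strategies_def)
  have "p (A ! e) \<le> p (A ! d)" using nth_utility_bounds(2)[OF t(2)] assms(5) by simp
  then show "p (cudd_outcome A t (g', d')) \<le> p (cudd_outcome A (g, d) (g', d'))"
    using assms(4,6) t(1)
    by (cases "h = g'") (simp_all add: payoff_agreement payoff_disagreement[OF assms(1)])
qed

lemma NE_outcome_characterized:
  assumes "is_pure_NE A s1 s2"
  shows "cudd_outcome A s1 s2 \<in> agreement_outcomes (set A) \<union> disagreement_outcomes (set A)"
proof -
  obtain g1 d1 g2 d2 where s: "s1 = (g1, d1)" "s2 = (g2, d2)" by fastforce
  have br: "is_best_reply A fst (g1, d1) (g2, d2)" "is_best_reply A snd (g2, d2) (g1, d1)"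
    using assms s by (simp_all add: is_pure_NE_iff_best_replies)
  then have idx: "g1 < length A" "d1 < length A" "g2 < length A" "d2 < length A"
    by (simp_all add: is_best_reply_def strategies_def)
  show ?thesis
  proof (cases "g1 = g2")
    case True
    have "max_utility fst (set A) + fst (A ! d2) \<le> 2 * fst (A ! g1)"
      using best_reply_agreement_bound[OF linear_fst] br(1) idx(4) True by simp
    moreover have "max_utility snd (set A) + snd (A ! d1) \<le> 2 * snd (A ! g1)"
      using best_reply_agreement_bound[OF linear_snd] br(2) idx(2) True by simp
    ultimately have "A ! g1 \<in> agreement_outcomes (set A)"
      using idx nth_utility_bounds(1)[OF idx(4), of fst] nth_utility_bounds(1)[OF idx(2), of snd]
      by (simp add: agreement_outcomes_def)
    then show ?thesis using True s by (simp add: cudd_outcome_eq)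
  next
    case False
    have "fst (A ! d1) = max_utility fst (set A)" "snd (A ! d2) = max_utility snd (set A)"
      using best_reply_disagreement_max[OF linear_fst br(1)] best_reply_disagreement_max[OF linear_snd br(2)]
        False by auto
    then have "midpoint (A ! d1) (A ! d2) \<in> disagreement_outcomes (set A)"
      unfolding disagreement_outcomes_def using idx by fastforce
    then show ?thesis using False s by (simp add: cudd_outcome_eq)
  qed
qed

lemma agreement_outcome_in_NEO:
  assumes "x \<in> agreement_outcomes (set A)"
  shows "x \<in> NEO A"
proof -
  obtain k where k: "k < length A" "A ! k = x"
    using assms by (auto simp: agreement_outcomes_def in_set_conv_nth)
  then have "A \<noteq> []" by auto
  obtain i1 where i1: "i1 < length A" "fst (A ! i1) = min_utility fst (set A)"
    using \<open>A \<noteq> []\<close> by (rule min_utility_attained_nth)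
  obtain i2 where i2: "i2 < length A" "snd (A ! i2) = min_utility snd (set A)"
    using \<open>A \<noteq> []\<close> by (rule min_utility_attained_nth)
  \<comment> \<open>each player threatens the alternative worst for the other\<close>
  have "is_best_reply A fst (k, i2) (k, i1)" "is_best_reply A snd (k, i1) (k, i2)"
    using assms k i1 i2
    by (auto simp: agreement_outcomes_def intro!: agreement_best_reply linear_fst linear_snd)
  then have "is_pure_NE A (k, i2) (k, i1)" by (simp add: is_pure_NE_iff_best_replies)
  moreover have "cudd_outcome A (k, i2) (k, i1) = x" using k by (simp add: cudd_outcome_eq)
  ultimately show ?thesis unfolding NEO_def by blast
qed

lemma disagreement_outcome_in_NEO:
  assumes "x \<in> disagreement_outcomes (set A)"
  shows "x \<in> NEO A"
proof -
  obtain i j where ij: "i < length A" "j < length A" "x = midpoint (A ! i) (A ! j)"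
    "fst (A ! i) = max_utility fst (set A)" "snd (A ! j) = max_utility snd (set A)"
    using assms unfolding disagreement_outcomes_def by (auto simp: in_set_conv_nth)
  show ?thesis
  proof (cases "i = j")
    case True
    have "A ! i \<in> agreement_outcomes (set A)"
      using ij True nth_utility_bounds(1)[OF ij(1), of fst] nth_utility_bounds(1)[OF ij(1), of snd]
      by (simp add: agreement_outcomes_def)
    then show ?thesis using ij True by (simp add: agreement_outcome_in_NEO)
  next
    case False
    have "is_best_reply A fst (i, i) (j, j)"
      using ij False nth_utility_bounds(2)[OF ij(2), of fst]
      by (intro disagreement_best_reply[OF linear_fst]) auto
    moreover have "is_best_reply A snd (j, j) (i, i)"
      using ij False nth_utility_bounds(2)[OF ij(1), of snd]
      by (intro disagreement_best_reply[OF linear_snd]) auto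
    ultimately have "is_pure_NE A (i, i) (j, j)" by (simp add: is_pure_NE_iff_best_replies)
    moreover have "cudd_outcome A (i, i) (j, j) = x" using ij False by (simp add: cudd_outcome_eq)
    ultimately show ?thesis unfolding NEO_def by blast
  qed
qed

theorem NEO_eq: "NEO A = agreement_outcomes (set A) \<union> disagreement_outcomes (set A)"
  using NE_outcome_characterized agreement_outcome_in_NEO disagreement_outcome_in_NEO
  unfolding NEO_def by blast

lemma swap_closed_utility_eq:
  assumes "\<And>x. x \<in> S \<Longrightarrow> swap_pair x \<in> S"
  shows "max_utility fst S = max_utility snd S" "min_utility fst S = min_utility snd S"
proof -
  have "fst ` S = snd ` S"
    using assms by (force simp: swap_pair_def image_iff)
  then show "max_utility fst S = max_utility snd S" "min_utility fst S = min_utility snd S"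
    by (simp_all add: max_utility_def min_utility_def)
qed

lemma swap_pair_midpoint: "swap_pair (midpoint a b) = midpoint (swap_pair b) (swap_pair a)"
  by (simp add: swap_pair_def midpoint_def algebra_simps)

lemma equilibrium_outcomes_swap_closed:
  assumes closed: "\<And>x. x \<in> S \<Longrightarrow> swap_pair x \<in> S"
    and x: "x \<in> agreement_outcomes S \<union> disagreement_outcomes S"
  shows "swap_pair x \<in> agreement_outcomes S \<union> disagreement_outcomes S"
  using x
proof
  assume "x \<in> agreement_outcomes S"
  then show ?thesis
    using closed[of x] swap_closed_utility_eq[OF closed]
    by (simp add: agreement_outcomes_def swap_pair_def)
next
  assume "x \<in> disagreement_outcomes S"
  then obtain a b where ab: "x = midpoint a b" "a \<in> S" "b \<in> S"
    "fst a = max_utility fst S" "snd b = max_utility snd S"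
    unfolding disagreement_outcomes_def by blast
  have "fst (swap_pair b) = max_utility fst S" "snd (swap_pair a) = max_utility snd S"
    using ab(4,5) swap_closed_utility_eq(1)[OF closed] by (simp_all add: swap_pair_def)
  then have "swap_pair x \<in> disagreement_outcomes S"
    using closed[OF ab(3)] closed[OF ab(2)]
    unfolding disagreement_outcomes_def ab(1) swap_pair_midpoint by blast
  then show ?thesis ..
qed

lemma agreement_outcomes_upward_closed:
  assumes "x \<in> agreement_outcomes S" "c \<in> S" "fst x < fst c" "snd x < snd c"
  shows "c \<in> agreement_outcomes S"
  using assms by (auto simp: agreement_outcomes_def)

lemma exists_pareto_efficient_equilibrium_outcome:
  assumes "finite S" "S \<noteq> {}"
  obtains x where "x \<in> agreement_outcomes S \<union> disagreement_outcomes S"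
    "\<not> (\<exists>c\<in>S. fst c > fst x \<and> snd c > snd x)"
proof (cases "agreement_outcomes S = {}")
  case False
  let ?sum = "\<lambda>y. fst y + snd y"
  have "finite (agreement_outcomes S)" using assms(1) by (simp add: agreement_outcomes_def)
  then have fin: "finite (?sum ` agreement_outcomes S)" by simp
  then have "Max (?sum ` agreement_outcomes S) \<in> ?sum ` agreement_outcomes S"
    using False by (intro Max_in) auto
  then obtain x where x: "x \<in> agreement_outcomes S" "?sum x = Max (?sum ` agreement_outcomes S)"
    by auto
  have "\<not> (\<exists>c\<in>S. fst c > fst x \<and> snd c > snd x)"
  proof
    assume "\<exists>c\<in>S. fst c > fst x \<and> snd c > snd x"
    then obtain c where c: "c \<in> S" "fst c > fst x" "snd c > snd x" by blast
    have "c \<in> agreement_outcomes S" using x(1) c by (rule agreement_outcomes_upward_closed)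
    then have "?sum c \<le> ?sum x" using fin x(2) by simp
    with c show False by linarith
  qed
  with x(1) show ?thesis using that by blast
next
  case True
  obtain a where a: "a \<in> S" "fst a = max_utility fst S" using assms by (rule max_utility_attained)
  obtain b where b: "b \<in> S" "snd b = max_utility snd S" using assms by (rule max_utility_attained)
  have "midpoint a b \<in> disagreement_outcomes S"
    using a b unfolding disagreement_outcomes_def by blast
  moreover have "\<not> (\<exists>c\<in>S. fst c > fst (midpoint a b) \<and> snd c > snd (midpoint a b))"
  proof
    assume "\<exists>c\<in>S. fst c > fst (midpoint a b) \<and> snd c > snd (midpoint a b)"
    then obtain c where "c \<in> S" "fst c > fst (midpoint a b)" "snd c > snd (midpoint a b)" by blast
    \<comment> \<open>\<open>c\<close> beats the midpoint, which already gives each player his (max + min)/2\<close>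
    then have "c \<in> agreement_outcomes S"
      using a b min_max_utility_bounds(1)[OF assms(1) a(1), of snd]
        min_max_utility_bounds(1)[OF assms(1) b(1), of fst]
      by (simp add: agreement_outcomes_def linear_midpoint linear_fst linear_snd)
    then show False using True by blast
  qed
  ultimately show ?thesis using that by blast
qed

lemma symmetric_collection_swap_closed:
  assumes "symmetric_collection A" "y \<in> set A"
  shows "swap_pair y \<in> set A"
proof (cases y)
  case (Pair y1 y2)
  have "count (mset A) (y2, y1) = count (mset A) (y1, y2)"
    using assms(1) by (simp add: symmetric_collection_def)
  also have "\<dots> \<noteq> 0" using assms(2) Pair by simp
  finally show ?thesis using Pair by (simp add: swap_pair_def)
qed

theorem corollary3:
  shows "mechanism_symmetric \<and> mechanism_IRA \<and> pareto_efficient_equilibrium_exists"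
proof (intro conjI)
  show mechanism_symmetric
    unfolding mechanism_symmetric_def
  proof (intro allI impI ballI)
    fix A x assume "is_collection A \<and> symmetric_collection A" "x \<in> NEO A"
    then show "swap_pair x \<in> NEO A"
      using equilibrium_outcomes_swap_closed[of "set A" x] symmetric_collection_swap_closed
      by (simp add: NEO_eq)
  qed
  show mechanism_IRA
    unfolding mechanism_IRA_def by (simp add: NEO_eq insert_absorb)
  show pareto_efficient_equilibrium_exists
    unfolding pareto_efficient_equilibrium_exists_def pareto_efficient_def
  proof (intro allI impI)
    fix A assume "is_collection A"
    then have "A \<noteq> []" by (simp add: is_collection_def)
    then show "\<exists>x\<in>NEO A. \<not> (\<exists>a\<in>set A. fst a > fst x \<and> snd a > snd x)"
      using exists_pareto_efficient_equilibrium_outcome[of "set A"] by (auto simp: NEO_eq)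
  qed
qed

end
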